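(* If $X$ is a second-countable well-filtered space, then the upper Vietoris topology and the Scott topology on $\mathsf{K}(X)$ coincide.
   Context: Spaces are $T_0$; specialization order $x\le y$ iff $x\in\overline{\{y\}}$; saturated = upper set. $\mathsf{K}(X)$ = nonempty compact saturated subsets ordered by reverse inclusion. Scott topology on a poset: upper sets $U$ such that every directed $D$ whose supremum exists and lies in $U$ meets $U$. Upper Vietoris topology on $\mathsf{K}(X)$: base $\Box U=\{K:K\subseteq U\}$, $U$ open. Well-filtered: for open $U$ and $\mathcal K\subseteq\mathsf{K}(X)$ filtered under inclusion, $\bigcap\mathcal K\subseteq U$ implies some $K\in\mathcal K$ lies in $U$. *)

theory Defs
  imports "HOL-Analysis.Analysis"
begin

definition spec_le :: "'a topology \<Rightarrow> 'a \<Rightarrow> 'a \<Rightarrow> bool" where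
  "spec_le X x y \<longleftrightarrow> x \<in> X closure_of {y}"

definition saturated_in :: "'a topology \<Rightarrow> 'a set \<Rightarrow> bool" where
  "saturated_in X A \<longleftrightarrow> A \<subseteq> topspace X \<and>
     (\<forall>x\<in>A. \<forall>y\<in>topspace X. spec_le X x y \<longrightarrow> y \<in> A)"

definition KX :: "'a topology \<Rightarrow> 'a set set" where
  "KX X = {K. K \<noteq> {} \<and> compactin X K \<and> saturated_in X K}"

definition box_set :: "'a topology \<Rightarrow> 'a set \<Rightarrow> 'a set set" where
  "box_set X U = {K \<in> KX X. K \<subseteq> U}"

definition upper_vietoris :: "'a topology \<Rightarrow> 'a set topology" where
  "upper_vietoris X = topology_generated_by {box_set X U | U. openin X U}"

definition directed_in :: "('b \<Rightarrow> 'b \<Rightarrow> bool) \<Rightarrow> 'b set \<Rightarrow> bool" where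
  "directed_in le D \<longleftrightarrow> D \<noteq> {} \<and> (\<forall>a\<in>D. \<forall>b\<in>D. \<exists>c\<in>D. le a c \<and> le b c)"

definition is_sup_in :: "'b set \<Rightarrow> ('b \<Rightarrow> 'b \<Rightarrow> bool) \<Rightarrow> 'b set \<Rightarrow> 'b \<Rightarrow> bool" where
  "is_sup_in P le D s \<longleftrightarrow> s \<in> P \<and> (\<forall>d\<in>D. le d s) \<and>
     (\<forall>t\<in>P. (\<forall>d\<in>D. le d t) \<longrightarrow> le s t)"

definition scott_open :: "'b set \<Rightarrow> ('b \<Rightarrow> 'b \<Rightarrow> bool) \<Rightarrow> 'b set \<Rightarrow> bool" where
  "scott_open P le U \<longleftrightarrow> U \<subseteq> P \<and>
     (\<forall>x\<in>U. \<forall>y\<in>P. le x y \<longrightarrow> y \<in> U) \<and>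
     (\<forall>D s. D \<subseteq> P \<and> directed_in le D \<and> is_sup_in P le D s \<and> s \<in> U \<longrightarrow> D \<inter> U \<noteq> {})"

definition scott_topology :: "'b set \<Rightarrow> ('b \<Rightarrow> 'b \<Rightarrow> bool) \<Rightarrow> 'b topology" where
  "scott_topology P le = topology (scott_open P le)"

definition filtered_family :: "'a set set \<Rightarrow> bool" where
  "filtered_family \<K> \<longleftrightarrow> \<K> \<noteq> {} \<and> (\<forall>A\<in>\<K>. \<forall>B\<in>\<K>. \<exists>C\<in>\<K>. C \<subseteq> A \<and> C \<subseteq> B)"

definition well_filtered :: "'a topology \<Rightarrow> bool" where
  "well_filtered X \<longleftrightarrow>
     (\<forall>U \<K>. openin X U \<and> \<K> \<subseteq> KX X \<and> filtered_family \<K> \<and> \<Inter>\<K> \<subseteq> U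
        \<longrightarrow> (\<exists>K\<in>\<K>. K \<subseteq> U))"

end

theory Submission
  imports Defs
begin

text \<open>
  A directed family in \<open>K(X)\<close> that has a supremum there is a filtered family of compact
  saturated sets whose supremum contains its intersection, so well-filteredness says exactly
  that every \<open>\<box>U\<close> is Scott open. Conversely, let \<open>\<U>\<close> be Scott open and \<open>K \<in> \<U>\<close>. By second
  countability \<open>K\<close> has a decreasing neighbourhood base \<open>V\<^sub>n\<close>. If no \<open>\<box>V\<^sub>n\<close> were contained
  in \<open>\<U>\<close>, pick \<open>K\<^sub>n \<subseteq> V\<^sub>n\<close> in \<open>K(X) - \<U>\<close>. Since the \<open>K\<^sub>n\<close> converge to \<open>K\<close>, the tails
  \<open>L\<^sub>n = K \<union> \<Union>\<^sub>m\<^sub>\<ge>\<^sub>n K\<^sub>m\<close> are compact saturated and decrease, and as a saturated set is the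
  intersection of its open neighbourhoods, their supremum in \<open>K(X)\<close> is \<open>K\<close>. Scott openness puts
  some \<open>L\<^sub>n\<close>, hence \<open>K\<^sub>n \<subseteq> L\<^sub>n\<close>, into \<open>\<U>\<close>, a contradiction.
\<close>

lemma spec_le_refl: "x \<in> topspace X \<Longrightarrow> spec_le X x x"
  unfolding spec_le_def in_closure_of by auto

lemma spec_le_trans: "spec_le X x y \<Longrightarrow> spec_le X y z \<Longrightarrow> spec_le X x z"
  unfolding spec_le_def in_closure_of by auto

lemma openin_spec_le_upward: "openin X U \<Longrightarrow> x \<in> U \<Longrightarrow> spec_le X x y \<Longrightarrow> y \<in> U"
  unfolding spec_le_def in_closure_of by auto

lemma saturated_in_separate_point:
  assumes "saturated_in X K" "y \<in> topspace X" "y \<notin> K"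
  obtains U where "openin X U" "K \<subseteq> U" "y \<notin> U"
proof -
  have "\<exists>T. openin X T \<and> x \<in> T \<and> y \<notin> T" if "x \<in> K" for x
  proof -
    have "\<not> spec_le X x y" "x \<in> topspace X"
      using assms that unfolding saturated_in_def by auto
    then show ?thesis unfolding spec_le_def in_closure_of by auto
  qed
  then obtain T where "\<And>x. x \<in> K \<Longrightarrow> openin X (T x) \<and> x \<in> T x \<and> y \<notin> T x"
    by metis
  then show thesis by (intro that[of "\<Union>x\<in>K. T x"]) auto
qed

lemma principal_upset_in_KX:
  assumes "x \<in> topspace X"
  shows "{y \<in> topspace X. spec_le X x y} \<in> KX X"
proof -
  let ?A = "{y \<in> topspace X. spec_le X x y}"
  have x: "x \<in> ?A" using assms spec_le_refl by auto
  have "compactin X ?A"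
    unfolding compactin_def
  proof (intro conjI allI impI)
    fix \<U> assume \<U>: "(\<forall>U\<in>\<U>. openin X U) \<and> ?A \<subseteq> \<Union>\<U>"
    then obtain U where "U \<in> \<U>" "x \<in> U" "openin X U" using x by blast
    then show "\<exists>\<F>. finite \<F> \<and> \<F> \<subseteq> \<U> \<and> ?A \<subseteq> \<Union>\<F>"
      using openin_spec_le_upward by (intro exI[of _ "{U}"]) fastforce
  qed blast
  moreover have "saturated_in X ?A"
    unfolding saturated_in_def by (blast intro: spec_le_trans)
  ultimately show ?thesis using x unfolding KX_def by auto
qed

lemma saturated_in_Un: "saturated_in X A \<Longrightarrow> saturated_in X B \<Longrightarrow> saturated_in X (A \<union> B)"
  unfolding saturated_in_def by blast

lemma saturated_in_UN: "(\<And>i. i \<in> I \<Longrightarrow> saturated_in X (A i)) \<Longrightarrow> saturated_in X (\<Union>i\<in>I. A i)"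
  unfolding saturated_in_def by blast

lemma scott_open_Int:
  assumes S: "scott_open P le S" and T: "scott_open P le T"
  shows "scott_open P le (S \<inter> T)"
  unfolding scott_open_def
proof (intro conjI allI impI ballI)
  show "S \<inter> T \<subseteq> P" using S unfolding scott_open_def by blast
  show "y \<in> S \<inter> T" if "x \<in> S \<inter> T" "y \<in> P" "le x y" for x y
    using S T that unfolding scott_open_def by blast
next
  fix D s assume D: "D \<subseteq> P \<and> directed_in le D \<and> is_sup_in P le D s \<and> s \<in> S \<inter> T"
  obtain d1 where d1: "d1 \<in> D" "d1 \<in> S" using D S unfolding scott_open_def by blast
  obtain d2 where d2: "d2 \<in> D" "d2 \<in> T" using D T unfolding scott_open_def by blast
  obtain c where c: "c \<in> D" "le d1 c" "le d2 c" using D d1 d2 unfolding directed_in_def by blast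
  have "c \<in> P" using c D by blast
  then have "c \<in> S" "c \<in> T" using S T d1 d2 c unfolding scott_open_def by blast+
  then show "D \<inter> (S \<inter> T) \<noteq> {}" using c by blast
qed

lemma scott_open_Union:
  assumes \<S>: "\<And>S. S \<in> \<S> \<Longrightarrow> scott_open P le S"
  shows "scott_open P le (\<Union>\<S>)"
  unfolding scott_open_def
proof (intro conjI allI impI ballI)
  show "\<Union>\<S> \<subseteq> P" using \<S> unfolding scott_open_def by blast
  show "y \<in> \<Union>\<S>" if "x \<in> \<Union>\<S>" "y \<in> P" "le x y" for x y
    using \<S> that unfolding scott_open_def by blast
next
  fix D s assume D: "D \<subseteq> P \<and> directed_in le D \<and> is_sup_in P le D s \<and> s \<in> \<Union>\<S>"
  then obtain S where S: "S \<in> \<S>" "s \<in> S" by blast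
  then have "D \<inter> S \<noteq> {}" using \<S>[OF S(1)] D unfolding scott_open_def by blast
  then show "D \<inter> \<Union>\<S> \<noteq> {}" using S by blast
qed

lemma istopology_scott_open: "istopology (scott_open P le)"
  unfolding istopology_def using scott_open_Int scott_open_Union by blast

lemma topology_generated_by_eqI:
  assumes "istopology P" "\<And>B. B \<in> \<B> \<Longrightarrow> P B"
    and "\<And>S x. P S \<Longrightarrow> x \<in> S \<Longrightarrow> \<exists>B\<in>\<B>. x \<in> B \<and> B \<subseteq> S"
  shows "topology_generated_by \<B> = topology P"
proof -
  have "generate_topology_on \<B> S \<longleftrightarrow> P S" for S
  proof
    show "generate_topology_on \<B> S \<Longrightarrow> P S"
      using generate_topology_on_coarsest assms(1,2) by blast
    assume "P S"
    then have "S = \<Union>{B \<in> \<B>. B \<subseteq> S}" using assms(3) by blast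
    then show "generate_topology_on \<B> S"
      by (metis (mono_tags, lifting) generate_topology_on.Basis generate_topology_on.UN mem_Collect_eq)
  qed
  then show ?thesis
    by (simp add: topology_eq openin_topology_generated_by_iff topology_inverse'[OF assms(1)])
qed

lemma Inter_subset_sup_in_KX:
  assumes D: "D \<subseteq> KX X" "D \<noteq> {}" and s: "is_sup_in (KX X) (\<lambda>K K'. K' \<subseteq> K) D s"
  shows "\<Inter>D \<subseteq> s"
proof
  fix x assume x: "x \<in> \<Inter>D"
  obtain d0 where "d0 \<in> D" using D(2) by blast
  then have "d0 \<subseteq> topspace X" using D(1) unfolding KX_def saturated_in_def by blast
  then have top: "x \<in> topspace X" using x \<open>d0 \<in> D\<close> by blast
  let ?A = "{y \<in> topspace X. spec_le X x y}"
  have below: "\<forall>d\<in>D. ?A \<subseteq> d"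
  proof
    fix d assume "d \<in> D"
    then have "saturated_in X d" "x \<in> d" using D(1) x unfolding KX_def by blast+
    then show "?A \<subseteq> d" unfolding saturated_in_def by blast
  qed
  have "\<forall>t\<in>KX X. (\<forall>d\<in>D. t \<subseteq> d) \<longrightarrow> t \<subseteq> s"
    using s unfolding is_sup_in_def by simp
  then have "?A \<subseteq> s" using principal_upset_in_KX[OF top] below by blast
  moreover have "x \<in> ?A" using top spec_le_refl by simp
  ultimately show "x \<in> s" by (rule subsetD)
qed

lemma box_set_scott_open:
  assumes "well_filtered X" "openin X U"
  shows "scott_open (KX X) (\<lambda>K K'. K' \<subseteq> K) (box_set X U)"
  unfolding scott_open_def
proof (intro conjI allI impI ballI)
  show "box_set X U \<subseteq> KX X" unfolding box_set_def by blast
  show "y \<in> box_set X U" if "x \<in> box_set X U" "y \<in> KX X" "y \<subseteq> x" for x y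
    using that unfolding box_set_def by blast
next
  fix D s assume D: "D \<subseteq> KX X \<and> directed_in (\<lambda>K K'. K' \<subseteq> K) D \<and>
      is_sup_in (KX X) (\<lambda>K K'. K' \<subseteq> K) D s \<and> s \<in> box_set X U"
  then have "filtered_family D"
    unfolding filtered_family_def directed_in_def by blast
  moreover have "\<Inter>D \<subseteq> U"
    using D Inter_subset_sup_in_KX[of D X s] unfolding directed_in_def box_set_def by blast
  ultimately obtain K where "K \<in> D" "K \<subseteq> U"
    using assms D unfolding well_filtered_def by blast
  then show "D \<inter> box_set X U \<noteq> {}" using D unfolding box_set_def by blast
qed

lemma is_sup_in_KX_if_neighbourhoods:
  assumes "K \<in> KX X" "\<And>d. d \<in> D \<Longrightarrow> K \<subseteq> d"
    and "\<And>U. openin X U \<Longrightarrow> K \<subseteq> U \<Longrightarrow> \<exists>d\<in>D. d \<subseteq> U"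
  shows "is_sup_in (KX X) (\<lambda>K K'. K' \<subseteq> K) D K"
proof -
  have "t \<subseteq> K" if t: "t \<in> KX X" "\<forall>d\<in>D. t \<subseteq> d" for t
  proof
    fix y assume y: "y \<in> t"
    show "y \<in> K"
    proof (rule ccontr)
      assume "y \<notin> K"
      moreover have "y \<in> topspace X" using t(1) y unfolding KX_def saturated_in_def by blast
      moreover have "saturated_in X K" using assms(1) unfolding KX_def by blast
      ultimately obtain U where U: "openin X U" "K \<subseteq> U" "y \<notin> U"
        using saturated_in_separate_point by metis
      then obtain d where "d \<in> D" "d \<subseteq> U" using assms(3) by blast
      then show False using t(2) y U(3) by blast
    qed
  qed
  then show ?thesis using assms(1,2) by (auto simp: is_sup_in_def)
qed

lemma compactin_countable_neighbourhood_base: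
  assumes "second_countable X" "compactin X K"
  obtains \<V> where "countable \<V>" "\<V> \<noteq> {}" "\<And>V. V \<in> \<V> \<Longrightarrow> openin X V \<and> K \<subseteq> V"
    "\<And>U. openin X U \<Longrightarrow> K \<subseteq> U \<Longrightarrow> \<exists>V\<in>\<V>. V \<subseteq> U"
proof -
  obtain \<B> where \<B>: "countable \<B>" "\<forall>V\<in>\<B>. openin X V"
    "\<forall>U x. openin X U \<and> x \<in> U \<longrightarrow> (\<exists>V\<in>\<B>. x \<in> V \<and> V \<subseteq> U)"
    using assms(1) unfolding second_countable_def by blast
  define \<V> where "\<V> = Union ` {\<C>. finite \<C> \<and> \<C> \<subseteq> \<B> \<and> K \<subseteq> \<Union>\<C>}"
  have base: "\<exists>V\<in>\<V>. V \<subseteq> U" if "openin X U" "K \<subseteq> U" for U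
  proof -
    have "K \<subseteq> \<Union>{B \<in> \<B>. B \<subseteq> U}" using \<B>(3) that by blast
    then obtain \<C> where "finite \<C>" "\<C> \<subseteq> {B \<in> \<B>. B \<subseteq> U}" "K \<subseteq> \<Union>\<C>"
      using assms(2) \<B>(2) unfolding compactin_def by (metis (no_types, lifting) mem_Collect_eq)
    then show ?thesis unfolding \<V>_def by blast
  qed
  show thesis
  proof (rule that)
    show "countable \<V>"
      unfolding \<V>_def using countable_Collect_finite_subset[OF \<B>(1)]
      by (rule countable_image[OF countable_subset, rotated]) blast
    show "\<V> \<noteq> {}"
      using base[OF openin_topspace compactin_subset_topspace[OF assms(2)]] by blast
    show "openin X V \<and> K \<subseteq> V" if "V \<in> \<V>" for V
      using that \<B>(2) unfolding \<V>_def by blast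
    show "\<exists>V\<in>\<V>. V \<subseteq> U" if "openin X U" "K \<subseteq> U" for U
      using base that .
  qed
qed

lemma countable_neighbourhood_base_decseq:
  assumes "countable \<V>" "\<V> \<noteq> {}" "\<And>V. V \<in> \<V> \<Longrightarrow> openin X V \<and> K \<subseteq> V"
  obtains V :: "nat \<Rightarrow> 'a set" where "\<And>n. openin X (V n)" "\<And>n. K \<subseteq> V n" "decseq V"
    "\<And>W. W \<in> \<V> \<Longrightarrow> \<exists>n. V n \<subseteq> W"
proof (rule that)
  let ?w = "from_nat_into \<V>"
  have w: "openin X (?w i)" "K \<subseteq> ?w i" for i
    using assms(3)[OF from_nat_into[OF assms(2)]] by simp_all
  show "openin X (\<Inter>(?w ` {..n}))" for n by (rule openin_Inter) (auto simp: w)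
  show "K \<subseteq> \<Inter>(?w ` {..n})" for n using w(2) by (simp add: INT_greatest)
  show "decseq (\<lambda>n. \<Inter>(?w ` {..n}))" by (rule decseq_SucI) auto
  show "\<exists>n. \<Inter>(?w ` {..n}) \<subseteq> W" if W: "W \<in> \<V>" for W
  proof -
    obtain n where "?w n = W" using from_nat_into_surj[OF assms(1) W] by blast
    then show ?thesis by (intro exI[of _ n]) auto
  qed
qed

lemma compactin_decseq_neighbourhood_base:
  assumes "second_countable X" "compactin X K"
  obtains V :: "nat \<Rightarrow> 'a set" where "\<And>n. openin X (V n)" "\<And>n. K \<subseteq> V n" "decseq V"
    "\<And>U. openin X U \<Longrightarrow> K \<subseteq> U \<Longrightarrow> \<exists>n. V n \<subseteq> U"
proof -
  obtain \<V> where \<V>: "countable \<V>" "\<V> \<noteq> {}" "\<And>V. V \<in> \<V> \<Longrightarrow> openin X V \<and> K \<subseteq> V"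
    "\<And>U. openin X U \<Longrightarrow> K \<subseteq> U \<Longrightarrow> \<exists>V\<in>\<V>. V \<subseteq> U"
    using compactin_countable_neighbourhood_base[OF assms] by metis
  obtain V where V: "\<And>n. openin X (V n)" "\<And>n. K \<subseteq> V n" "decseq V"
    "\<And>W. W \<in> \<V> \<Longrightarrow> \<exists>n. V n \<subseteq> W"
    using countable_neighbourhood_base_decseq[OF \<V>(1-3)] by metis
  show thesis
  proof (rule that[OF V(1-3)])
    fix U assume "openin X U" "K \<subseteq> U"
    then obtain W where "W \<in> \<V>" "W \<subseteq> U" using \<V>(4) by blast
    then show "\<exists>n. V n \<subseteq> U" using V(4) by blast
  qed
qed

lemma compactin_Un_convergent:
  fixes L :: "nat \<Rightarrow> 'a set"
  assumes "compactin X K" "\<And>m. compactin X (L m)"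
    and "\<And>U. openin X U \<Longrightarrow> K \<subseteq> U \<Longrightarrow> \<exists>N. \<forall>m\<ge>N. L m \<subseteq> U"
  shows "compactin X (K \<union> (\<Union>m. L m))"
  unfolding compactin_def
proof (intro conjI allI impI)
  show "K \<union> (\<Union>m. L m) \<subseteq> topspace X"
    using assms(1,2) compactin_subset_topspace by blast
  fix \<U> assume "(\<forall>U\<in>\<U>. openin X U) \<and> K \<union> (\<Union>m. L m) \<subseteq> \<Union>\<U>"
  then have \<U>: "\<forall>U\<in>\<U>. openin X U" and cover: "K \<union> (\<Union>m. L m) \<subseteq> \<Union>\<U>" by blast+
  have "K \<subseteq> \<Union>\<U>" using cover by blast
  then obtain \<F> where \<F>: "finite \<F>" "\<F> \<subseteq> \<U>" "K \<subseteq> \<Union>\<F>"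
    using assms(1) \<U> unfolding compactin_def by meson
  have "openin X (\<Union>\<F>)" using \<F>(2) \<U> by (intro openin_Union) blast
  then obtain N where N: "\<forall>m\<ge>N. L m \<subseteq> \<Union>\<F>" using assms(3) \<F>(3) by blast
  have "compactin X (\<Union>(L ` {..<N}))"
    using assms(2) by (intro compactin_Union) auto
  moreover have "\<Union>(L ` {..<N}) \<subseteq> \<Union>\<U>" using cover by blast
  ultimately obtain \<G> where \<G>: "finite \<G>" "\<G> \<subseteq> \<U>" "\<Union>(L ` {..<N}) \<subseteq> \<Union>\<G>"
    using \<U> unfolding compactin_def by meson
  have "L m \<subseteq> \<Union>(\<F> \<union> \<G>)" for m
  proof (cases "m < N")
    case True
    then show ?thesis using \<G>(3) by blast
  next
    case False
    then show ?thesis using N by (simp add: Union_Un_distrib le_supI1)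
  qed
  then show "\<exists>\<F>'. finite \<F>' \<and> \<F>' \<subseteq> \<U> \<and> K \<union> (\<Union>m. L m) \<subseteq> \<Union>\<F>'"
    using \<F> \<G> by (intro exI[of _ "\<F> \<union> \<G>"]) auto
qed

lemma directed_in_range_decseq:
  assumes "decseq L"
  shows "directed_in (\<lambda>A B. B \<subseteq> A) (range L)"
  unfolding directed_in_def
proof (intro conjI ballI)
  fix A B assume "A \<in> range L" "B \<in> range L"
  then obtain i j where "A = L i" "B = L j" by blast
  then show "\<exists>C\<in>range L. C \<subseteq> A \<and> C \<subseteq> B"
    using decseqD[OF assms, of i "max i j"] decseqD[OF assms, of j "max i j"] by auto
qed simp

lemma KX_tails_directed_sup:
  fixes Kn :: "nat \<Rightarrow> 'a set"
  assumes K: "K \<in> KX X" and Kn: "\<And>n. Kn n \<in> KX X"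
    and Kn_tail: "\<And>U. openin X U \<Longrightarrow> K \<subseteq> U \<Longrightarrow> \<exists>N. \<forall>m\<ge>N. Kn m \<subseteq> U"
  defines "L \<equiv> \<lambda>n. K \<union> (\<Union>m. Kn (m + n))"
  shows "range L \<subseteq> KX X" and "directed_in (\<lambda>A B. B \<subseteq> A) (range L)"
    and "is_sup_in (KX X) (\<lambda>A B. B \<subseteq> A) (range L) K"
proof -
  have "L n \<in> KX X" for n
  proof -
    have "compactin X (L n)"
      unfolding L_def
    proof (rule compactin_Un_convergent)
      show "compactin X K" "compactin X (Kn (m + n))" for m using K Kn unfolding KX_def by blast+
      show "\<exists>N. \<forall>m\<ge>N. Kn (m + n) \<subseteq> U" if "openin X U" "K \<subseteq> U" for U
        using Kn_tail[OF that] by (meson le_add1 order_trans)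
    qed
    moreover have "saturated_in X (L n)"
      unfolding L_def using K Kn by (intro saturated_in_Un saturated_in_UN) (auto simp: KX_def)
    ultimately show ?thesis using K unfolding L_def KX_def by blast
  qed
  then show "range L \<subseteq> KX X" by blast
  have "L (Suc n) \<subseteq> L n" for n
  proof -
    have "Kn (m + Suc n) \<subseteq> (\<Union>m. Kn (m + n))" for m
      using UN_upper[of "Suc m" UNIV "\<lambda>m. Kn (m + n)"] by simp
    then show ?thesis unfolding L_def by blast
  qed
  then show "directed_in (\<lambda>A B. B \<subseteq> A) (range L)"
    by (intro directed_in_range_decseq decseq_SucI)
  show "is_sup_in (KX X) (\<lambda>A B. B \<subseteq> A) (range L) K"
  proof (rule is_sup_in_KX_if_neighbourhoods[OF K])
    show "K \<subseteq> d" if "d \<in> range L" for d using that unfolding L_def by blast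
    show "\<exists>d\<in>range L. d \<subseteq> U" if U: "openin X U" "K \<subseteq> U" for U
    proof -
      obtain N where "\<forall>m\<ge>N. Kn m \<subseteq> U" using Kn_tail[OF U] by blast
      then have "L N \<subseteq> U" using U(2) le_add2[of N] unfolding L_def by blast
      then show ?thesis by blast
    qed
  qed
qed

lemma scott_open_KX_contains_box:
  assumes "second_countable X" and \<U>: "scott_open (KX X) (\<lambda>K K'. K' \<subseteq> K) \<U>" and "K \<in> \<U>"
  shows "\<exists>U. openin X U \<and> K \<subseteq> U \<and> box_set X U \<subseteq> \<U>"
proof (rule ccontr)
  assume no_box: "\<not> ?thesis"
  have \<U>_sub: "\<U> \<subseteq> KX X"
    and \<U>_down: "\<And>A B. A \<in> \<U> \<Longrightarrow> B \<in> KX X \<Longrightarrow> B \<subseteq> A \<Longrightarrow> B \<in> \<U>"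
    and \<U>_inaccessible: "\<And>D s. D \<subseteq> KX X \<Longrightarrow> directed_in (\<lambda>K K'. K' \<subseteq> K) D \<Longrightarrow>
      is_sup_in (KX X) (\<lambda>K K'. K' \<subseteq> K) D s \<Longrightarrow> s \<in> \<U> \<Longrightarrow> D \<inter> \<U> \<noteq> {}"
    using \<U> unfolding scott_open_def by (simp_all, blast)
  have K: "K \<in> KX X" using \<U>_sub \<open>K \<in> \<U>\<close> by blast
  then have "compactin X K" unfolding KX_def by blast
  then obtain V where V: "\<And>n. openin X (V n)" "\<And>n. K \<subseteq> V n" "decseq V"
    "\<And>U. openin X U \<Longrightarrow> K \<subseteq> U \<Longrightarrow> \<exists>n. V n \<subseteq> U"
    using compactin_decseq_neighbourhood_base[OF assms(1)] by metis
  have "\<not> box_set X (V n) \<subseteq> \<U>" for n using no_box V(1,2) by blast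
  then have "\<forall>n. \<exists>L. L \<in> KX X \<and> L \<subseteq> V n \<and> L \<notin> \<U>"
    unfolding box_set_def by blast
  then obtain Kn where "\<forall>n. Kn n \<in> KX X \<and> Kn n \<subseteq> V n \<and> Kn n \<notin> \<U>"
    by (rule choice[THEN exE])
  then have Kn: "\<And>n. Kn n \<in> KX X" "\<And>n. Kn n \<subseteq> V n" "\<And>n. Kn n \<notin> \<U>" by blast+
  have Kn_tail: "\<exists>N. \<forall>m\<ge>N. Kn m \<subseteq> U" if U: "openin X U" "K \<subseteq> U" for U
  proof -
    obtain N where "V N \<subseteq> U" using V(4)[OF U] by blast
    then have "Kn m \<subseteq> U" if "N \<le> m" for m
      using Kn(2)[of m] decseqD[OF V(3) that] by blast
    then show ?thesis by blast
  qed
  define L where "L n = K \<union> (\<Union>m. Kn (m + n))" for n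
  have "range L \<subseteq> KX X" "directed_in (\<lambda>A B. B \<subseteq> A) (range L)"
    "is_sup_in (KX X) (\<lambda>A B. B \<subseteq> A) (range L) K"
    using KX_tails_directed_sup[OF K Kn(1) Kn_tail] unfolding L_def by blast+
  then obtain n where "L n \<in> \<U>"
    using \<U>_inaccessible[of "range L" K] \<open>K \<in> \<U>\<close> by blast
  moreover have "Kn n \<in> KX X" "Kn n \<subseteq> L n"
    unfolding L_def using Kn(1) UN_upper[of 0 UNIV "\<lambda>m. Kn (m + n)"] by auto
  ultimately show False using \<U>_down Kn(3) by blast
qed

theorem mainTheorem16:
  fixes X :: "'a topology"
  assumes "t0_space X" and "second_countable X" and "well_filtered X"
  shows "upper_vietoris X = scott_topology (KX X) (\<lambda>K K'. K' \<subseteq> K)"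
  unfolding upper_vietoris_def scott_topology_def
proof (rule topology_generated_by_eqI[OF istopology_scott_open])
  show "scott_open (KX X) (\<lambda>K K'. K' \<subseteq> K) B" if "B \<in> {box_set X U | U. openin X U}" for B
    using that box_set_scott_open[OF assms(3)] by blast
  show "\<exists>B\<in>{box_set X U | U. openin X U}. K \<in> B \<and> B \<subseteq> \<U>"
    if \<U>: "scott_open (KX X) (\<lambda>K K'. K' \<subseteq> K) \<U>" and "K \<in> \<U>" for \<U> K
  proof -
    obtain U where "openin X U" "K \<subseteq> U" "box_set X U \<subseteq> \<U>"
      using scott_open_KX_contains_box[OF assms(2) \<U> \<open>K \<in> \<U>\<close>] by blast
    moreover have "K \<in> KX X" using \<U> \<open>K \<in> \<U>\<close> unfolding scott_open_def by blast
    ultimately show ?thesis unfolding box_set_def by blast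
  qed
qed

end
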